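(* Let $m\ge1$ and let $\mathcal C\subseteq\mathbb Z^m$ be a code with minimum distance $d_a(\mathcal C)=d$. Then: (i) for all non-negative integers $r^+,r^-$ with $r^++r^-<d$, $\overline\mu(\mathcal C)\le|S_m(r^+,r^-)|^{-1}$; (ii) if $2\le d\le 2m+1$, then $\overline\mu(\mathcal C)<\lceil\tfrac{d-1}{2}\rceil!\,\lfloor\tfrac{d-1}{2}\rfloor!\,\big(m+1-\lceil\tfrac{d-1}{2}\rceil\big)^{1-d}$; (iii) if $1\le m<d$, then $\overline\mu(\mathcal C)<2^m (m!)^3\,((2m)!)^{-1}(d-m)^{-m}$.
   Context: $d_a(\mathbf x,\mathbf y)=\max\{\sum_{i:x_i>y_i}(x_i-y_i),\sum_{i:x_i<y_i}(y_i-x_i)\}$ on $\mathbb Z^m$; $d_a(\mathcal C)$ is the minimum distance. $S_m(r^+,r^-)=\{\mathbf x\in\mathbb Z^m:\sum_{i:x_i>0}x_i\le r^+,\ \sum_{i:x_i<0}|x_i|\le r^-\}$. The upper density is $\overline\mu(\mathcal C)=\limsup_{k\to\infty}|\mathcal C\cap\{-k,\dots,k\}^m|/(2k+1)^m$. *)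

theory Defs
  imports Complex_Main "HOL-Library.Extended_Real"
begin

text \<open>Z^m is represented by integer sequences vanishing at indices >= m.\<close>
definition zvec :: "nat \<Rightarrow> (nat \<Rightarrow> int) set" where
  "zvec m = {x. \<forall>i\<ge>m. x i = 0}"

definition dist_a :: "nat \<Rightarrow> (nat \<Rightarrow> int) \<Rightarrow> (nat \<Rightarrow> int) \<Rightarrow> int" where
  "dist_a m x y = max (\<Sum>i\<in>{i. i < m \<and> x i > y i}. x i - y i)
                      (\<Sum>i\<in>{i. i < m \<and> x i < y i}. y i - x i)"

definition has_min_dist :: "nat \<Rightarrow> (nat \<Rightarrow> int) set \<Rightarrow> int \<Rightarrow> bool" where
  "has_min_dist m C d \<longleftrightarrow>
     (\<forall>x\<in>C. \<forall>y\<in>C. x \<noteq> y \<longrightarrow> d \<le> dist_a m x y) \<and>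
     (\<exists>x\<in>C. \<exists>y\<in>C. x \<noteq> y \<and> dist_a m x y = d)"

definition S_ball :: "nat \<Rightarrow> nat \<Rightarrow> nat \<Rightarrow> (nat \<Rightarrow> int) set" where
  "S_ball m rp rm = {x \<in> zvec m.
      (\<Sum>i\<in>{i. i < m \<and> x i > 0}. x i) \<le> int rp \<and>
      (\<Sum>i\<in>{i. i < m \<and> x i < 0}. \<bar>x i\<bar>) \<le> int rm}"

definition cube :: "nat \<Rightarrow> nat \<Rightarrow> (nat \<Rightarrow> int) set" where
  "cube m k = {x \<in> zvec m. \<forall>i<m. - int k \<le> x i \<and> x i \<le> int k}"

definition upper_density :: "nat \<Rightarrow> (nat \<Rightarrow> int) set \<Rightarrow> ereal" where
  "upper_density m C =
     limsup (\<lambda>k. ereal (real (card (C \<inter> cube m k)) / real (2 * k + 1) ^ m))"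

end

theory Submission
  imports Defs
begin

text \<open>
  If \<open>r\<^sup>+ + r\<^sup>- < d\<close>, the translates \<open>c + S\<^sub>m(r\<^sup>+, r\<^sup>-)\<close> of the ball by the codewords are
  pairwise disjoint: a common point would put two codewords at asymmetric distance at
  most \<open>r\<^sup>+ + r\<^sup>-\<close>. Those lying in the cube of radius \<open>k\<close> fit into the cube of radius
  \<open>k + max r\<^sup>+ r\<^sup>-\<close>, which gives (i) as \<open>k \<rightarrow> \<infinity>\<close>.
  Splitting on the last coordinate shows
  \<open>|S\<^sub>m(a, b)| = \<Sum>\<^sub>k C(m,k) C(a,k) C(b+m-k, m-k)\<close>, and (ii), (iii) follow from (i) for
  suitable \<open>a + b = d - 1\<close> by bounding this sum from below with
  \<open>(n+1)\<^sup>b \<le> b! C(n+b, b)\<close>, Vandermonde's identity and \<open>\<Sum>\<^sub>k C(m,k)\<^sup>2 = C(2m, m)\<close>.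
\<close>

definition dist_a_separated :: "nat \<Rightarrow> (nat \<Rightarrow> int) set \<Rightarrow> int \<Rightarrow> bool" where
  "dist_a_separated m C d \<longleftrightarrow> (\<forall>x\<in>C. \<forall>y\<in>C. x \<noteq> y \<longrightarrow> d \<le> dist_a m x y)"

definition pos_mass :: "nat \<Rightarrow> (nat \<Rightarrow> int) \<Rightarrow> int" where
  "pos_mass m x = (\<Sum>i<m. max (x i) 0)"

definition neg_mass :: "nat \<Rightarrow> (nat \<Rightarrow> int) \<Rightarrow> int" where
  "neg_mass m x = (\<Sum>i<m. max (- x i) 0)"

lemma sum_pos_coords_eq_pos_mass: "(\<Sum>i\<in>{i. i < m \<and> x i > 0}. x i) = pos_mass m x"
proof -
  have "{i. i < m \<and> x i > 0} = {i\<in>{..<m}. x i > 0}" by auto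
  then have "(\<Sum>i\<in>{i. i < m \<and> x i > 0}. x i) = (\<Sum>i<m. if x i > 0 then x i else 0)"
    using sum.inter_filter[of "{..<m}" x "\<lambda>i. x i > 0"] by simp
  also have "\<dots> = pos_mass m x" unfolding pos_mass_def by (rule sum.cong) auto
  finally show ?thesis .
qed

lemma sum_neg_coords_eq_neg_mass: "(\<Sum>i\<in>{i. i < m \<and> x i < 0}. \<bar>x i\<bar>) = neg_mass m x"
proof -
  have "{i. i < m \<and> x i < 0} = {i\<in>{..<m}. x i < 0}" by auto
  then have "(\<Sum>i\<in>{i. i < m \<and> x i < 0}. \<bar>x i\<bar>) = (\<Sum>i<m. if x i < 0 then \<bar>x i\<bar> else 0)"
    using sum.inter_filter[of "{..<m}" "\<lambda>i. \<bar>x i\<bar>" "\<lambda>i. x i < 0"] by simp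
  also have "\<dots> = neg_mass m x" unfolding neg_mass_def by (rule sum.cong) auto
  finally show ?thesis .
qed

lemma dist_a_eq_max_mass:
  "dist_a m x y = max (pos_mass m (\<lambda>i. x i - y i)) (neg_mass m (\<lambda>i. x i - y i))"
  using sum_pos_coords_eq_pos_mass[where m = m and x = "\<lambda>i. x i - y i"]
    sum_neg_coords_eq_neg_mass[where m = m and x = "\<lambda>i. x i - y i"]
  by (simp add: dist_a_def)

lemma S_ball_eq_mass_ball:
  "S_ball m a b = {x \<in> zvec m. pos_mass m x \<le> int a \<and> neg_mass m x \<le> int b}"
  unfolding S_ball_def sum_pos_coords_eq_pos_mass sum_neg_coords_eq_neg_mass ..

lemma pos_mass_nonneg: "0 \<le> pos_mass m x"
  unfolding pos_mass_def by (rule sum_nonneg) auto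

lemma neg_mass_nonneg: "0 \<le> neg_mass m x"
  unfolding neg_mass_def by (rule sum_nonneg) auto

lemma pos_mass_Suc: "pos_mass (Suc m) x = pos_mass m x + max (x m) 0"
  unfolding pos_mass_def by simp

lemma neg_mass_Suc: "neg_mass (Suc m) x = neg_mass m x + max (- x m) 0"
  unfolding neg_mass_def by simp

lemma pos_mass_fun_upd [simp]: "pos_mass m (x(m := t)) = pos_mass m x"
  unfolding pos_mass_def by (rule sum.cong) auto

lemma neg_mass_fun_upd [simp]: "neg_mass m (x(m := t)) = neg_mass m x"
  unfolding neg_mass_def by (rule sum.cong) auto

lemma coord_le_mass:
  assumes "i < m"
  shows "x i \<le> pos_mass m x" and "- x i \<le> neg_mass m x"
proof -
  have "max (x i) 0 \<le> pos_mass m x"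
    unfolding pos_mass_def by (rule member_le_sum) (use assms in auto)
  then show "x i \<le> pos_mass m x" by simp
  have "max (- x i) 0 \<le> neg_mass m x"
    unfolding neg_mass_def by (rule member_le_sum) (use assms in auto)
  then show "- x i \<le> neg_mass m x" by simp
qed

lemma mass_diff_le:
  "pos_mass m (\<lambda>i. x i - y i) \<le> pos_mass m x + neg_mass m y"
  "neg_mass m (\<lambda>i. x i - y i) \<le> neg_mass m x + pos_mass m y"
  unfolding pos_mass_def neg_mass_def sum.distrib[symmetric] by (rule sum_mono; auto)+

lemma cube_Suc_subset:
  "cube (Suc m) k \<subseteq> (\<Union>t\<in>{-int k..int k}. (\<lambda>x. x(m := t)) ` cube m k)"
proof
  fix x assume x: "x \<in> cube (Suc m) k"
  then have "x(m := 0) \<in> cube m k" and "x m \<in> {-int k..int k}"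
    unfolding cube_def zvec_def by auto
  moreover have "x = (x(m := 0))(m := x m)" by simp
  ultimately show "x \<in> (\<Union>t\<in>{-int k..int k}. (\<lambda>x. x(m := t)) ` cube m k)" by blast
qed

lemma finite_cube_card_le: "finite (cube m k) \<and> card (cube m k) \<le> (2 * k + 1) ^ m"
proof (induction m)
  case 0
  have "cube 0 k = {\<lambda>_. 0}" unfolding cube_def zvec_def by auto
  then show ?case by simp
next
  case (Suc m)
  let ?U = "\<Union>t\<in>{-int k..int k}. (\<lambda>x. x(m := t)) ` cube m k"
  have fin: "finite ?U" using Suc by auto
  have "card (cube (Suc m) k) \<le> card ?U"
    by (rule card_mono[OF fin cube_Suc_subset])
  also have "\<dots> \<le> (\<Sum>t\<in>{-int k..int k}. card ((\<lambda>x. x(m := t)) ` cube m k))"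
    by (rule card_UN_le) simp
  also have "\<dots> \<le> (\<Sum>t\<in>{-int k..int k}. (2 * k + 1) ^ m)"
    by (rule sum_mono) (meson Suc.IH card_image_le le_trans)
  also have "\<dots> = (2 * k + 1) ^ Suc m"
  proof -
    have "nat (2 * int k + 1) = 2 * k + 1" by simp
    then show ?thesis by simp
  qed
  finally show ?case using finite_subset[OF cube_Suc_subset fin] by simp
qed

lemma finite_cube: "finite (cube m k)"
  using finite_cube_card_le by blast

lemma card_cube_le: "card (cube m k) \<le> (2 * k + 1) ^ m"
  using finite_cube_card_le by blast

lemma S_ball_subset_cube: "S_ball m a b \<subseteq> cube m (max a b)"
proof
  fix x assume "x \<in> S_ball m a b"
  then have "x \<in> zvec m" "pos_mass m x \<le> int a" "neg_mass m x \<le> int b"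
    by (auto simp: S_ball_eq_mass_ball)
  with coord_le_mass[of _ m x] show "x \<in> cube m (max a b)"
    unfolding cube_def by force
qed

lemma finite_S_ball: "finite (S_ball m a b)"
  using finite_subset[OF S_ball_subset_cube finite_cube] .

lemma card_S_ball_pos: "0 < card (S_ball m a b)"
proof -
  have "(\<lambda>_. 0) \<in> S_ball m a b"
    unfolding S_ball_eq_mass_ball zvec_def pos_mass_def neg_mass_def by simp
  then show ?thesis using finite_S_ball card_gt_0_iff by blast
qed

subsection \<open>The size of \<open>S\<^sub>m(a, b)\<close>\<close>

lemma fun_upd_last_zero_mem_S_ball:
  assumes "x \<in> zvec (Suc m)" "pos_mass m x \<le> int a" "neg_mass m x \<le> int b"
  shows "x(m := 0) \<in> S_ball m a b"
  using assms unfolding S_ball_eq_mass_ball zvec_def by auto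

lemma S_ball_Suc:
  "S_ball (Suc m) a b =
     (\<Union>s\<in>{..a}. (\<lambda>x. x(m := int (a - s))) ` S_ball m s b) \<union>
     (\<Union>s\<in>{..<b}. (\<lambda>x. x(m := - int (b - s))) ` S_ball m a s)"
proof (intro equalityI subsetI)
  fix x assume "x \<in> S_ball (Suc m) a b"
  then have z: "x \<in> zvec (Suc m)" and p: "pos_mass m x + max (x m) 0 \<le> int a"
    and n: "neg_mass m x + max (- x m) 0 \<le> int b"
    by (auto simp: S_ball_eq_mass_ball pos_mass_Suc neg_mass_Suc)
  have p': "pos_mass m x \<le> int a" and n': "neg_mass m x \<le> int b"
    using p n max.cobounded2[of "x m" 0] max.cobounded2[of "- x m" 0] by linarith+
  have x_eq: "x = (x(m := 0))(m := x m)" by simp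
  show "x \<in> (\<Union>s\<in>{..a}. (\<lambda>x. x(m := int (a - s))) ` S_ball m s b) \<union>
     (\<Union>s\<in>{..<b}. (\<lambda>x. x(m := - int (b - s))) ` S_ball m a s)"
  proof (cases "x m \<ge> 0")
    case True
    define s where "s = a - nat (x m)"
    have "x m \<le> int a" using p pos_mass_nonneg[of m x] True by simp
    then have "int (a - s) = x m" "s \<le> a" "pos_mass m x \<le> int s"
      using p True unfolding s_def by auto
    moreover have "x(m := 0) \<in> S_ball m s b"
      using fun_upd_last_zero_mem_S_ball[OF z \<open>pos_mass m x \<le> int s\<close> n'] .
    ultimately have "x \<in> (\<lambda>x. x(m := int (a - s))) ` S_ball m s b"
      using x_eq by (metis image_eqI)
    then show ?thesis using \<open>s \<le> a\<close> by blast
  next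
    case False
    define s where "s = b - nat (- x m)"
    have "- x m \<le> int b" using n neg_mass_nonneg[of m x] False by simp
    then have "- int (b - s) = x m" "s < b" "neg_mass m x \<le> int s"
      using n False unfolding s_def by auto
    moreover have "x(m := 0) \<in> S_ball m a s"
      using fun_upd_last_zero_mem_S_ball[OF z p' \<open>neg_mass m x \<le> int s\<close>] .
    ultimately have "x \<in> (\<lambda>x. x(m := - int (b - s))) ` S_ball m a s"
      using x_eq by (metis image_eqI)
    then show ?thesis using \<open>s < b\<close> by blast
  qed
next
  fix x assume "x \<in> (\<Union>s\<in>{..a}. (\<lambda>x. x(m := int (a - s))) ` S_ball m s b) \<union>
     (\<Union>s\<in>{..<b}. (\<lambda>x. x(m := - int (b - s))) ` S_ball m a s)"
  then show "x \<in> S_ball (Suc m) a b"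
    unfolding S_ball_eq_mass_ball zvec_def by (auto simp: pos_mass_Suc neg_mass_Suc)
qed

lemma inj_on_fun_upd_S_ball: "inj_on (\<lambda>x. x(m := t)) (S_ball m a b)"
proof (rule inj_onI)
  fix x y assume "x \<in> S_ball m a b" "y \<in> S_ball m a b" and eq: "x(m := t) = y(m := t)"
  then have "x m = 0" "y m = 0" by (auto simp: S_ball_def zvec_def)
  with eq show "x = y" by (metis fun_upd_triv fun_upd_upd)
qed

lemma card_S_ball_Suc:
  "card (S_ball (Suc m) a b) = (\<Sum>s\<le>a. card (S_ball m s b)) + (\<Sum>s<b. card (S_ball m a s))"
proof -
  let ?A = "\<Union>s\<in>{..a}. (\<lambda>x. x(m := int (a - s))) ` S_ball m s b"
  let ?B = "\<Union>s\<in>{..<b}. (\<lambda>x. x(m := - int (b - s))) ` S_ball m a s"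
  have "card ?A = (\<Sum>s\<le>a. card ((\<lambda>x. x(m := int (a - s))) ` S_ball m s b))"
    by (rule card_UN_disjoint) (auto simp: finite_S_ball dest!: fun_cong[where x = m])
  also have "\<dots> = (\<Sum>s\<le>a. card (S_ball m s b))"
    by (intro sum.cong refl card_image inj_on_fun_upd_S_ball)
  finally have A: "card ?A = (\<Sum>s\<le>a. card (S_ball m s b))" .
  have "card ?B = (\<Sum>s<b. card ((\<lambda>x. x(m := - int (b - s))) ` S_ball m a s))"
    by (rule card_UN_disjoint) (auto simp: finite_S_ball dest!: fun_cong[where x = m])
  also have "\<dots> = (\<Sum>s<b. card (S_ball m a s))"
    by (intro sum.cong refl card_image inj_on_fun_upd_S_ball)
  finally have B: "card ?B = (\<Sum>s<b. card (S_ball m a s))" .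
  have "?A \<inter> ?B = {}" by (force dest: fun_cong[where x = m])
  then have "card (?A \<union> ?B) = card ?A + card ?B"
    by (intro card_Un_disjoint) (auto simp: finite_S_ball)
  then show ?thesis unfolding S_ball_Suc A B .
qed

definition S_ball_size :: "nat \<Rightarrow> nat \<Rightarrow> nat \<Rightarrow> nat" where
  "S_ball_size m a b = (\<Sum>k\<le>m. (m choose k) * (a choose k) * ((b + (m - k)) choose (m - k)))"

lemma sum_shifted_choose: "(\<Sum>s<b. (s + n) choose n) = (b + n) choose Suc n"
  by (induction b) auto

lemma sum_S_ball_size_first_arg:
  "(\<Sum>s\<le>a. S_ball_size m s b) =
     (\<Sum>k\<le>m. (m choose k) * ((b + (m - k)) choose (m - k)) * (Suc a choose Suc k))"
proof -
  have "(\<Sum>s\<le>a. S_ball_size m s b) =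
      (\<Sum>k\<le>m. \<Sum>s\<le>a. (m choose k) * ((b + (m - k)) choose (m - k)) * (s choose k))"
    unfolding S_ball_size_def by (subst sum.swap) (simp add: algebra_simps)
  then show ?thesis by (simp add: sum_distrib_left[symmetric] sum_choose_upper)
qed

lemma sum_S_ball_size_second_arg:
  "(\<Sum>s<b. S_ball_size m a s) =
     (\<Sum>k\<le>m. (m choose k) * (a choose k) * ((b + (m - k)) choose Suc (m - k)))"
proof -
  have "(\<Sum>s<b. S_ball_size m a s) =
      (\<Sum>k\<le>m. \<Sum>s<b. (m choose k) * (a choose k) * ((s + (m - k)) choose (m - k)))"
    unfolding S_ball_size_def by (subst sum.swap) (simp add: algebra_simps)
  then show ?thesis by (simp only: sum_distrib_left[symmetric] sum_shifted_choose)
qed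

text \<open>Pascal's rule, once in \<open>a\<close> and once in \<open>b\<close>, turns both sums into the two halves of
  \<open>S_ball_size (m + 1) a b\<close> split by Pascal's rule in \<open>m\<close>.\<close>

lemma S_ball_size_Suc: "S_ball_size (Suc m) a b = (\<Sum>s\<le>a. S_ball_size m s b) + (\<Sum>s<b. S_ball_size m a s)"
proof -
  define p where "p j = (m choose j) * (a choose j) * ((b + (Suc m - j)) choose (Suc m - j))" for j
  define q where "q k = (m choose k) * (a choose Suc k) * ((b + (m - k)) choose (m - k))" for k
  have "(\<Sum>s\<le>a. S_ball_size m s b) + (\<Sum>s<b. S_ball_size m a s) = (\<Sum>k\<le>m. q k + p k)"
    unfolding sum_S_ball_size_first_arg sum_S_ball_size_second_arg sum.distrib[symmetric]
  proof (rule sum.cong[OF refl])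
    fix k assume "k \<in> {..m}"
    then have "Suc m - k = Suc (m - k)" by auto
    then show "(m choose k) * ((b + (m - k)) choose (m - k)) * (Suc a choose Suc k) +
        (m choose k) * (a choose k) * ((b + (m - k)) choose Suc (m - k)) = q k + p k"
      unfolding p_def q_def by (simp add: algebra_simps)
  qed
  also have "\<dots> = p 0 + (\<Sum>k\<le>m. q k + p (Suc k))"
  proof -
    have "(\<Sum>k\<le>m. p k) = (\<Sum>k\<le>Suc m. p k)" by (simp add: p_def)
    also have "\<dots> = p 0 + (\<Sum>k\<le>m. p (Suc k))" by (rule sum.atMost_Suc_shift)
    finally show ?thesis by (simp add: sum.distrib)
  qed
  also have "\<dots> = S_ball_size (Suc m) a b"
    unfolding S_ball_size_def by (subst sum.atMost_Suc_shift) (simp add: p_def q_def algebra_simps)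
  finally show ?thesis by simp
qed

lemma card_S_ball: "card (S_ball m a b) = S_ball_size m a b"
proof (induction m arbitrary: a b)
  case 0
  have "S_ball 0 a b = {\<lambda>_. 0}" unfolding S_ball_def zvec_def by auto
  then show ?case by (simp add: S_ball_size_def)
next
  case (Suc m)
  then show ?case by (simp add: card_S_ball_Suc S_ball_size_Suc)
qed

subsection \<open>The packing bound\<close>

lemma translate_S_ball_in_cube:
  assumes "c \<in> cube m k" and "s \<in> S_ball m a b"
  shows "(\<lambda>i. c i + s i) \<in> cube m (k + max a b)"
  using assms S_ball_subset_cube[of m a b] unfolding cube_def zvec_def by fastforce

lemma S_ball_translates_disjoint:
  assumes min_dist: "dist_a_separated m C d"
    and "int a + int b < d" and "c \<in> C" "c' \<in> C" "c \<noteq> c'"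
  shows "(\<lambda>s i. c i + s i) ` S_ball m a b \<inter> (\<lambda>s i. c' i + s i) ` S_ball m a b = {}"
proof (rule ccontr)
  assume "\<not> ?thesis"
  then obtain s s' where s: "s \<in> S_ball m a b" and s': "s' \<in> S_ball m a b"
    and eq: "(\<lambda>i. c i + s i) = (\<lambda>i. c' i + s' i)"
    by auto
  have diff: "(\<lambda>i. c i - c' i) = (\<lambda>i. s' i - s i)"
  proof
    fix i show "c i - c' i = s' i - s i" using fun_cong[OF eq, of i] by simp
  qed
  have "dist_a m c c' \<le> int a + int b"
    using mass_diff_le[of m s' s] s s'
    unfolding dist_a_eq_max_mass diff S_ball_eq_mass_ball by auto
  moreover have "d \<le> dist_a m c c'" using min_dist assms(3-5) unfolding dist_a_separated_def by blast
  ultimately show False using assms(2) by simp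
qed

lemma card_code_in_cube_mult_card_S_ball_le:
  assumes min_dist: "dist_a_separated m C d"
    and "int a + int b < d"
  shows "card (C \<inter> cube m k) * card (S_ball m a b) \<le> (2 * (k + max a b) + 1) ^ m"
proof -
  let ?D = "C \<inter> cube m k"
  let ?T = "\<lambda>c. (\<lambda>s i. c i + s i) ` S_ball m a b"
  have "card ?D * card (S_ball m a b) = (\<Sum>c\<in>?D. card (?T c))"
    by (simp add: card_image inj_on_def fun_eq_iff)
  also have "\<dots> = card (\<Union>c\<in>?D. ?T c)"
    using finite_cube[of m k] S_ball_translates_disjoint[OF assms]
    by (intro card_UN_disjoint[symmetric]) (auto simp: finite_S_ball)
  also have "\<dots> \<le> card (cube m (k + max a b))"
  proof (rule card_mono)
    show "finite (cube m (k + max a b))" by (rule finite_cube)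
    show "(\<Union>c\<in>?D. ?T c) \<subseteq> cube m (k + max a b)" using translate_S_ball_in_cube by blast
  qed
  also have "\<dots> \<le> (2 * (k + max a b) + 1) ^ m"
    by (rule card_cube_le)
  finally show ?thesis .
qed

lemma enlarged_cube_ratio_tendsto_1:
  "(\<lambda>k::nat. ((2 * (real k + R) + 1) / (2 * real k + 1)) ^ m) \<longlonglongrightarrow> 1"
proof -
  have "filterlim (\<lambda>k::nat. 2 * real k + 1) at_top sequentially"
    by (rule filterlim_at_top_mono[OF filterlim_real_sequentially]) auto
  then have "(\<lambda>k::nat. 2 * R / (2 * real k + 1)) \<longlonglongrightarrow> 0"
    by (rule real_tendsto_divide_at_top[OF tendsto_const])
  then have "(\<lambda>k::nat. (1 + 2 * R / (2 * real k + 1)) ^ m) \<longlonglongrightarrow> (1 + 0) ^ m"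
    by (intro tendsto_power tendsto_add tendsto_const)
  moreover have "(2 * (real k + R) + 1) / (2 * real k + 1) = 1 + 2 * R / (2 * real k + 1)"
    for k :: nat
    by (simp add: field_simps)
  ultimately show ?thesis by simp
qed

lemma upper_density_le_inverse_card_S_ball:
  assumes min_dist: "dist_a_separated m C d"
    and "int a + int b < d"
  shows "upper_density m C \<le> ereal (1 / real (card (S_ball m a b)))"
proof -
  define N where "N = card (S_ball m a b)"
  define R where "R = max a b"
  define f where "f k = ((2 * (real k + real R) + 1) / (2 * real k + 1)) ^ m / real N" for k :: nat
  have N: "0 < real N" unfolding N_def using card_S_ball_pos by simp
  have "real (card (C \<inter> cube m k)) / real (2 * k + 1) ^ m \<le> f k" for k
  proof -
    have "real (card (C \<inter> cube m k)) * real N \<le> real ((2 * (k + R) + 1) ^ m)"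
      using card_code_in_cube_mult_card_S_ball_le[OF assms, of k]
      unfolding N_def R_def by (simp only: of_nat_mult[symmetric] of_nat_le_iff)
    then have "real (card (C \<inter> cube m k)) * real N \<le> (2 * (real k + real R) + 1) ^ m"
      by (simp add: algebra_simps)
    with N show ?thesis unfolding f_def by (simp add: power_divide field_simps)
  qed
  then have "upper_density m C \<le> limsup (\<lambda>k. ereal (f k))"
    unfolding upper_density_def by (intro Limsup_mono) auto
  also have "limsup (\<lambda>k. ereal (f k)) = ereal (1 / real N)"
  proof (rule lim_imp_Limsup)
    show "(\<lambda>k. ereal (f k)) \<longlonglongrightarrow> ereal (1 / real N)"
      unfolding f_def using N
      by (intro tendsto_ereal tendsto_divide enlarged_cube_ratio_tendsto_1 tendsto_const) auto
  qed simp
  finally show ?thesis unfolding N_def .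
qed

subsection \<open>Lower bounds for \<open>|S\<^sub>m(a, b)|\<close>\<close>

lemma Suc_power_le_fact_mult_choose: "real (n + 1) ^ b \<le> fact b * real ((n + b) choose b)"
proof (induction b)
  case 0
  then show ?case by simp
next
  case (Suc b)
  have pascal: "real (Suc b) * real (Suc (n + b) choose Suc b) = real (Suc (n + b)) * real ((n + b) choose b)"
    by (simp only: of_nat_mult[symmetric] Suc_times_binomial)
  have "real (n + 1) ^ Suc b = real (n + 1) * real (n + 1) ^ b" by simp
  also have "\<dots> \<le> real (Suc (n + b)) * (fact b * real ((n + b) choose b))"
    by (rule mult_mono) (use Suc.IH in auto)
  also have "\<dots> = fact b * (real (Suc (n + b)) * real ((n + b) choose b))"
    by (simp only: mult_ac)
  also have "\<dots> = fact (Suc b) * real ((n + Suc b) choose Suc b)"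
    unfolding pascal[symmetric] by (simp only: fact_Suc add_Suc_right mult_ac)
  finally show ?case .
qed

lemma S_ball_size_ge_choose_mult_choose:
  assumes "a \<le> m"
  shows "((m + a) choose a) * ((b + (m - a)) choose b) \<le> S_ball_size m a b"
proof -
  have vandermonde': "(\<Sum>k\<le>m. (m choose k) * (a choose k)) = (m + a) choose a"
  proof -
    have "(\<Sum>k\<le>m. (m choose k) * (a choose k)) = (\<Sum>k\<le>a. (m choose k) * (a choose k))"
      by (rule sum.mono_neutral_right) (use assms in auto)
    also have "\<dots> = (\<Sum>k\<le>a. (m choose k) * (a choose (a - k)))"
      by (rule sum.cong[OF refl]) (simp add: binomial_symmetric[symmetric])
    also have "\<dots> = (m + a) choose a" by (rule vandermonde)
    finally show ?thesis .
  qed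
  have choose_mono: "((b + (m - a)) choose b) \<le> ((b + (m - k)) choose (m - k))" if "k \<le> a" for k
  proof -
    have "((b + (m - a)) choose b) \<le> ((b + (m - k)) choose b)"
      by (rule binomial_right_mono) (use that in auto)
    also have "\<dots> = ((b + (m - k)) choose (m - k))"
      by (metis add_diff_cancel_left' binomial_symmetric le_add1)
    finally show ?thesis .
  qed
  have "(m choose k) * (a choose k) * ((b + (m - a)) choose b)
      \<le> (m choose k) * (a choose k) * ((b + (m - k)) choose (m - k))" for k
  proof (cases "k \<le> a")
    case True
    then show ?thesis by (rule mult_left_mono[OF choose_mono]) simp
  qed simp
  then have "(\<Sum>k\<le>m. (m choose k) * (a choose k) * ((b + (m - a)) choose b)) \<le> S_ball_size m a b"
    unfolding S_ball_size_def by (rule sum_mono)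
  then show ?thesis by (simp add: vandermonde' flip: sum_distrib_right)
qed

lemma power_lt_fact_mult_S_ball_size:
  assumes "1 \<le> a" "a \<le> m"
  shows "real (m + 1 - a) ^ (a + b) < fact a * fact b * real (S_ball_size m a b)"
proof -
  have "real (m + 1 - a) ^ a < real (m + 1) ^ a"
    by (rule power_strict_mono) (use assms in auto)
  also have "\<dots> \<le> fact a * real ((m + a) choose a)"
    using Suc_power_le_fact_mult_choose[of m a] by simp
  finally have A: "real (m + 1 - a) ^ a < fact a * real ((m + a) choose a)" .
  have B: "real (m + 1 - a) ^ b \<le> fact b * real ((b + (m - a)) choose b)"
    using Suc_power_le_fact_mult_choose[of "m - a" b] assms by (simp add: add.commute Suc_diff_le)
  have "real (m + 1 - a) ^ (a + b) = real (m + 1 - a) ^ a * real (m + 1 - a) ^ b"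
    by (simp add: power_add)
  also have "\<dots> < (fact a * real ((m + a) choose a)) * (fact b * real ((b + (m - a)) choose b))"
    by (rule mult_less_le_imp_less[OF A B]) (use assms in auto)
  also have "\<dots> = fact a * fact b * real (((m + a) choose a) * ((b + (m - a)) choose b))"
    by simp
  also have "\<dots> \<le> fact a * fact b * real (S_ball_size m a b)"
    using S_ball_size_ge_choose_mult_choose[OF assms(2), of b]
    by (intro mult_left_mono) (simp_all only: of_nat_le_iff fact_ge_zero mult_nonneg_nonneg)
  finally show ?thesis .
qed

lemma S_ball_size_term_lower_bound:
  fixes c :: real
  assumes "k \<le> m" "m \<le> a" "0 \<le> c" "c \<le> real a - real m + 1" "c \<le> real b + 1"
  shows "real (m choose k) ^ 2 * c ^ m
    \<le> fact m * real ((m choose k) * (a choose k) * ((b + (m - k)) choose (m - k)))"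
proof -
  have A: "c ^ k \<le> fact k * real (a choose k)"
  proof -
    have "c ^ k \<le> real (a - k + 1) ^ k" by (rule power_mono) (use assms in auto)
    also have "\<dots> \<le> fact k * real (a choose k)"
      using Suc_power_le_fact_mult_choose[of "a - k" k] assms by simp
    finally show ?thesis .
  qed
  have B: "c ^ (m - k) \<le> fact (m - k) * real ((b + (m - k)) choose (m - k))"
  proof -
    have "c ^ (m - k) \<le> real (b + 1) ^ (m - k)" by (rule power_mono) (use assms in auto)
    then show ?thesis using Suc_power_le_fact_mult_choose[of b "m - k"] by linarith
  qed
  have fact_m: "fact m = real (m choose k) * fact k * fact (m - k)"
    using binomial_fact_lemma[OF assms(1)]
    by (metis (mono_tags, lifting) mult.assoc mult.commute of_nat_fact of_nat_mult)
  have "real (m choose k) ^ 2 * c ^ m = real (m choose k) ^ 2 * (c ^ k * c ^ (m - k))"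
    using assms(1) by (simp add: power_add[symmetric])
  also have "\<dots> \<le> real (m choose k) ^ 2 *
      ((fact k * real (a choose k)) * (fact (m - k) * real ((b + (m - k)) choose (m - k))))"
    by (intro mult_left_mono mult_mono A B) (use assms in auto)
  also have "\<dots> = fact m * real ((m choose k) * (a choose k) * ((b + (m - k)) choose (m - k)))"
    unfolding fact_m by (simp add: power2_eq_square algebra_simps)
  finally show ?thesis .
qed

text \<open>Termwise comparison with \<open>C(2m, m) = \<Sum>\<^sub>k C(m,k)\<^sup>2\<close>; the term \<open>k = m\<close> is strict.\<close>

lemma central_binomial_mult_power_lt_S_ball_size:
  fixes c :: real
  assumes "1 \<le> m" "0 < c" "c < real a - real m + 1" "c \<le> real b + 1"
  shows "real ((2 * m) choose m) * c ^ m < fact m * real (S_ball_size m a b)"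
proof -
  have "m \<le> a" using assms by linarith
  let ?t = "\<lambda>k. fact m * real ((m choose k) * (a choose k) * ((b + (m - k)) choose (m - k)))"
  have strict: "real (m choose m) ^ 2 * c ^ m < ?t m"
  proof -
    have "c ^ m < real (a - m + 1) ^ m"
      by (rule power_strict_mono) (use assms \<open>m \<le> a\<close> in auto)
    also have "\<dots> \<le> fact m * real (a choose m)"
      using Suc_power_le_fact_mult_choose[of "a - m" m] \<open>m \<le> a\<close> by simp
    finally show ?thesis by simp
  qed
  have "real ((2 * m) choose m) * c ^ m = (\<Sum>k\<le>m. real (m choose k) ^ 2 * c ^ m)"
    unfolding choose_square_sum[symmetric] by (simp add: sum_distrib_right)
  also have "\<dots> < (\<Sum>k\<le>m. ?t k)"
  proof (rule sum_strict_mono_ex1)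
    show "\<forall>k\<in>{..m}. real (m choose k) ^ 2 * c ^ m \<le> ?t k"
      using S_ball_size_term_lower_bound \<open>m \<le> a\<close> assms by auto
    show "\<exists>k\<in>{..m}. real (m choose k) ^ 2 * c ^ m < ?t k"
      using strict by blast
  qed simp
  also have "\<dots> = fact m * real (S_ball_size m a b)"
    unfolding S_ball_size_def by (simp add: sum_distrib_left)
  finally show ?thesis .
qed

subsection \<open>The explicit density bounds\<close>

lemma ceiling_half_plus_floor_half: "\<lceil>real_of_int e / 2\<rceil> + \<lfloor>real_of_int e / 2\<rfloor> = e"
proof (cases "even e")
  case True
  then obtain q where "e = 2 * q" by blast
  then show ?thesis by simp
next
  case False
  then obtain q where e: "e = 2 * q + 1" using oddE by blast
  have "\<lceil>real_of_int e / 2\<rceil> = q + 1" by (rule ceiling_unique) (use e in auto)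
  moreover have "\<lfloor>real_of_int e / 2\<rfloor> = q" by (rule floor_unique) (use e in auto)
  ultimately show ?thesis using e by simp
qed

lemma upper_density_lt_fact_mult_fact:
  assumes min_dist: "dist_a_separated m C d"
    and "1 \<le> a" "a \<le> m" "int a + int b < d"
  shows "upper_density m C < ereal (fact a * fact b * (1 / real (m + 1 - a) ^ (a + b)))"
proof -
  have "1 / real (card (S_ball m a b)) < fact a * fact b * (1 / real (m + 1 - a) ^ (a + b))"
    using power_lt_fact_mult_S_ball_size[OF assms(2,3), of b] card_S_ball_pos[of m a b] assms(3)
    by (simp add: card_S_ball field_simps)
  moreover have "upper_density m C \<le> ereal (1 / real (card (S_ball m a b)))"
    using upper_density_le_inverse_card_S_ball[OF min_dist assms(4)] .
  ultimately show ?thesis by (simp add: le_less_trans)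
qed

lemma upper_density_lt_balanced_radii:
  assumes min_dist: "dist_a_separated m C d"
    and d: "2 \<le> d" "d \<le> 2 * int m + 1"
  shows "upper_density m C <
    ereal (fact (nat \<lceil>(real_of_int d - 1) / 2\<rceil>) * fact (nat \<lfloor>(real_of_int d - 1) / 2\<rfloor>)
      * (real m + 1 - real_of_int \<lceil>(real_of_int d - 1) / 2\<rceil>) powr (1 - real_of_int d))"
proof -
  define a where "a = nat \<lceil>(real_of_int d - 1) / 2\<rceil>"
  define b where "b = nat \<lfloor>(real_of_int d - 1) / 2\<rfloor>"
  have a_eq: "int a = \<lceil>(real_of_int d - 1) / 2\<rceil>" and b_eq: "int b = \<lfloor>(real_of_int d - 1) / 2\<rfloor>"
    using d by (simp_all add: a_def b_def)
  have "int (a + b) = d - 1"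
    using ceiling_half_plus_floor_half[of "d - 1"] a_eq b_eq by simp
  then have "real_of_int (int (a + b)) = real_of_int (d - 1)" by simp
  then have exponent: "1 - real_of_int d = - real (a + b)" by simp
  have "1 \<le> \<lceil>(real_of_int d - 1) / 2\<rceil>" "\<lceil>(real_of_int d - 1) / 2\<rceil> \<le> int m"
    unfolding le_ceiling_iff ceiling_le_iff using d by simp_all
  then have "1 \<le> a" "a \<le> m"
    unfolding a_eq[symmetric] by simp_all
  have base: "real m + 1 - real_of_int \<lceil>(real_of_int d - 1) / 2\<rceil> = real (m + 1 - a)"
    unfolding a_eq[symmetric] using \<open>a \<le> m\<close> by simp
  have "real (m + 1 - a) powr real (a + b) = real (m + 1 - a) ^ (a + b)"
    using \<open>a \<le> m\<close> by (intro powr_realpow) simp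
  then have powr_eq: "(real m + 1 - real_of_int \<lceil>(real_of_int d - 1) / 2\<rceil>) powr (1 - real_of_int d)
      = 1 / real (m + 1 - a) ^ (a + b)"
    unfolding base exponent powr_minus by (simp add: divide_inverse)
  have "int a + int b < d" using \<open>int (a + b) = d - 1\<close> by simp
  then show ?thesis
    unfolding powr_eq a_def[symmetric] b_def[symmetric]
    by (rule upper_density_lt_fact_mult_fact[OF min_dist \<open>1 \<le> a\<close> \<open>a \<le> m\<close>])
qed

lemma upper_density_lt_central_binomial:
  assumes min_dist: "dist_a_separated m C d"
    and "1 \<le> m" "0 < c" "real_of_int d - real m = 2 * c"
  shows "upper_density m C < ereal (fact m / (real ((2 * m) choose m) * c ^ m))"
proof -
  define b where "b = nat (\<lceil>c\<rceil> - 1)"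
  define a where "a = nat (d - \<lceil>c\<rceil>)"
  have "1 \<le> \<lceil>c\<rceil>" "\<lceil>c\<rceil> \<le> d"
    unfolding le_ceiling_iff ceiling_le_iff using assms(3,4) by simp_all
  have int_b: "int b = \<lceil>c\<rceil> - 1" and int_a: "int a = d - \<lceil>c\<rceil>"
    using \<open>1 \<le> \<lceil>c\<rceil>\<close> \<open>\<lceil>c\<rceil> \<le> d\<close> unfolding a_def b_def by (simp_all add: of_nat_diff)
  then have "real b = real_of_int \<lceil>c\<rceil> - 1" "real a = real_of_int d - real_of_int \<lceil>c\<rceil>"
    by (metis of_int_of_nat_eq of_int_diff of_int_1)+
  moreover have "real_of_int \<lceil>c\<rceil> < c + 1" "c \<le> real_of_int \<lceil>c\<rceil>"
    by linarith+
  ultimately have "c < real a - real m + 1" "c \<le> real b + 1"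
    using assms(4) by linarith+
  have "1 / real (card (S_ball m a b)) < fact m / (real ((2 * m) choose m) * c ^ m)"
    using central_binomial_mult_power_lt_S_ball_size[OF \<open>1 \<le> m\<close> \<open>0 < c\<close> \<open>c < real a - real m + 1\<close> \<open>c \<le> real b + 1\<close>]
      card_S_ball_pos[of m a b] \<open>0 < c\<close>
    by (simp add: card_S_ball field_simps)
  moreover have "upper_density m C \<le> ereal (1 / real (card (S_ball m a b)))"
    using int_a int_b by (intro upper_density_le_inverse_card_S_ball[OF min_dist]) simp
  ultimately show ?thesis by (simp add: le_less_trans)
qed

lemma fact_double_eq_central_binomial: "(fact (2 * m) :: real) = real ((2 * m) choose m) * fact m * fact m"
  using binomial_fact[of m "2 * m", where 'a = real] by (simp add: field_simps)

lemma upper_density_lt_large_distance: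
  assumes min_dist: "dist_a_separated m C d"
    and "1 \<le> m" "int m < d"
  shows "upper_density m C <
    ereal (2 ^ m * fact m ^ 3 / fact (2 * m) * (real_of_int d - real m) powr (- real m))"
proof -
  define c where "c = (real_of_int d - real m) / 2"
  have "real m < real_of_int d" using assms(3) by (metis of_int_less_iff of_int_of_nat_eq)
  then have "0 < c" and d_eq: "real_of_int d - real m = 2 * c" unfolding c_def by simp_all
  have "(2 * c) powr real m = (2 * c) ^ m"
    using \<open>0 < c\<close> by (simp add: powr_realpow)
  then have powr_eq: "(real_of_int d - real m) powr (- real m) = 1 / (2 ^ m * c ^ m)"
    unfolding d_eq powr_minus by (simp add: power_mult_distrib divide_inverse)
  have "2 ^ m * fact m ^ 3 / fact (2 * m) * (real_of_int d - real m) powr (- real m)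
      = fact m / (real ((2 * m) choose m) * c ^ m)"
    unfolding powr_eq fact_double_eq_central_binomial
    using \<open>0 < c\<close> by (simp add: field_simps power3_eq_cube)
  then show ?thesis
    using upper_density_lt_central_binomial[OF min_dist \<open>1 \<le> m\<close> \<open>0 < c\<close> d_eq] by simp
qed

theorem mainTheorem7:
  fixes m :: nat and C :: "(nat \<Rightarrow> int) set" and d :: int
  assumes "m \<ge> 1"
    and "C \<subseteq> zvec m"
    and "has_min_dist m C d"
  shows "(\<forall>rp rm :: nat. int rp + int rm < d \<longrightarrow>
            upper_density m C \<le> ereal (1 / real (card (S_ball m rp rm))))
       \<and> (2 \<le> d \<and> d \<le> 2 * int m + 1 \<longrightarrow>
            upper_density m C <
              ereal (fact (nat \<lceil>(real_of_int d - 1) / 2\<rceil>)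
                   * fact (nat \<lfloor>(real_of_int d - 1) / 2\<rfloor>)
                   * (real m + 1 - real_of_int \<lceil>(real_of_int d - 1) / 2\<rceil>)
                       powr (1 - real_of_int d)))
       \<and> (1 \<le> m \<and> int m < d \<longrightarrow>
            upper_density m C <
              ereal (2 ^ m * fact m ^ 3 / fact (2 * m)
                   * (real_of_int d - real m) powr (- real m)))"
proof -
  have min_dist: "dist_a_separated m C d"
    using assms(3) unfolding has_min_dist_def dist_a_separated_def by blast
  show ?thesis
    using upper_density_le_inverse_card_S_ball[OF min_dist]
      upper_density_lt_balanced_radii[OF min_dist] upper_density_lt_large_distance[OF min_dist]
    by blast
qed

end
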